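(* Let $G$ be a $B_2$-EPG graph given with a representation, let $a$ be a row, and let $Y$ be a nonempty set of vertices whose indices all contain $a$. Suppose the projection graph of $Y$ on $a$ is a clique. Then there is a proper typed interval $t$ on row $a$ such that: (1) every vertex of $Y$ contains $t$; (2) for every vertex $u$ whose index is $\{a\}$ or $\{a,c\}$ where the row $c$ is not in the index of any vertex of $Y$, $u$ is adjacent to every vertex of $Y$ if and only if $u$ intersects $t$.
   Context: A graph $G$ is a $B_k$-EPG graph if each vertex $u$ can be assigned a path $P_u$ in the planar orthogonal grid with at most $k$ bends such that $uv\in E(G)$ iff $P_u$ and $P_v$ share at least one grid edge (a representation); for $B_2$-EPG graphs one assumes w.l.o.g. every path has exactly two bends. A vertex $u$ intersects a row if $P_u$ contains a grid edge of that row; the index of $u$ is the set of rows it intersects. If $a$ is in the index of $u$, $P_u^a$ is the segment of row $a$ between the two points of row $a$ where $P_u$ stops or bends. Types: $\emptyset$, $\mathsf d$, $\mathsf u$. A typed interval on row $a$ is $[x\alpha, y\beta]$ with $\alpha\le\beta$ points of row $a$ and $x,y$ types; it is proper if $\alpha\neq\beta$, or $\alpha=\beta$, $x=y$ and $x\in\{\mathsf u,\mathsf d\}$. For typed intervals $t=[x\alpha,y\beta]$, $t'=[x'\alpha',y'\beta']$ on row $a$ and an endpoint $z\gamma\in\{x'\alpha',y'\beta'\}$ of $t'$, $t$ is coherent with $z\gamma$ if (i) $\gamma\in(\alpha,\beta)$ (open interval), or (ii) $z=\emptyset$ and $[\alpha,\beta]$ contains the grid edge of $[\alpha',\beta']$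 incident to $\gamma$, or (iii) $z\neq\emptyset$ and $z\gamma\in\{x\alpha,y\beta\}$. $t$ contains $t'$ if $[\alpha',\beta']\subseteq[\alpha,\beta]$ and $t$ is coherent with both endpoints of $t'$. $t$ intersects $t'$ if $[\alpha,\beta]\cap[\alpha',\beta']$ contains a grid edge, or $t$ is coherent with an endpoint of $t'$, or $t'$ is coherent with an endpoint of $t$. The t-projection of $u$ on $a$ is $[x\alpha,y\beta]$ where $\alpha,\beta$ are the endpoints of $P_u^a$ and the type of an endpoint $\gamma$ is $\emptyset$ if $P_u$ ends at $\gamma$, $\mathsf d$ if $P_u$ bends downwards at $\gamma$, $\mathsf u$ if upwards. A vertex contains (intersects) a typed interval $t$ on $a$ if its t-projection on $a$ contains (intersects) $t$. The projection graph of a set $Y$ of vertices whose indices contain $a$ is the graph on $Y$ in which $u,v$ are adjacent iff their t-projections on $a$ intersect. *)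

theory Defs
  imports Main
begin

text \<open>Grid points are pairs (x, y) of integers; row y = a is the horizontal line
  of all points (x, a); y increases upwards.\<close>
type_synonym point = "int \<times> int"

text \<open>Grid edges: HE x y joins (x,y) and (x+1,y); VE x y joins (x,y) and (x,y+1).\<close>
datatype gedge = HE int int | VE int int

definition seg_edges :: "point \<Rightarrow> point \<Rightarrow> gedge set" where
  "seg_edges p q =
     (if snd p = snd q then {HE x (snd p) | x. min (fst p) (fst q) \<le> x \<and> x < max (fst p) (fst q)}
      else if fst p = fst q then {VE (fst p) y | y. min (snd p) (snd q) \<le> y \<and> y < max (snd p) (snd q)}
      else {})"

text \<open>A grid path is represented by the list of its corner points: its two end points
  and its bend points, in order.  Its grid edges are those of its maximal straight segments.\<close>
definition path_edges :: "point list \<Rightarrow> gedge set" where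
  "path_edges ps = (\<Union>i < length ps - 1. seg_edges (ps ! i) (ps ! Suc i))"

definition horiz_seg :: "point \<Rightarrow> point \<Rightarrow> bool" where
  "horiz_seg p q \<longleftrightarrow> snd p = snd q \<and> fst p \<noteq> fst q"

definition vert_seg :: "point \<Rightarrow> point \<Rightarrow> bool" where
  "vert_seg p q \<longleftrightarrow> fst p = fst q \<and> snd p \<noteq> snd q"

text \<open>A grid path with exactly two bends: corner list [p0,p1,p2,p3] whose three segments
  are non-degenerate and alternate horizontal/vertical (each bend is a right-angle turn;
  such a path is automatically simple).\<close>
definition two_bend_path :: "point list \<Rightarrow> bool" where
  "two_bend_path ps \<longleftrightarrow> length ps = 4 \<and>
     ((horiz_seg (ps!0) (ps!1) \<and> vert_seg (ps!1) (ps!2) \<and> horiz_seg (ps!2) (ps!3)) \<or>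
      (vert_seg (ps!0) (ps!1) \<and> horiz_seg (ps!1) (ps!2) \<and> vert_seg (ps!2) (ps!3)))"

definition B2_EPG_rep :: "'v set \<Rightarrow> ('v \<Rightarrow> 'v \<Rightarrow> bool) \<Rightarrow> ('v \<Rightarrow> point list) \<Rightarrow> bool" where
  "B2_EPG_rep V E P \<longleftrightarrow>
     (\<forall>u\<in>V. two_bend_path (P u)) \<and>
     (\<forall>u\<in>V. \<forall>v\<in>V. E u v \<longleftrightarrow> u \<noteq> v \<and> path_edges (P u) \<inter> path_edges (P v) \<noteq> {})"

definition index :: "('v \<Rightarrow> point list) \<Rightarrow> 'v \<Rightarrow> int set" where
  "index P u = {a. \<exists>x. HE x a \<in> path_edges (P u)}"

datatype ttype = TEmpty | TDown | TUp

text \<open>A typed interval [x alpha, y beta] on a (fixed) row is ((x, alpha), (y, beta)) with alpha \<le> beta;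
  alpha, beta are the x-coordinates of points of that row.\<close>
type_synonym tint = "(ttype \<times> int) \<times> (ttype \<times> int)"

definition typed_interval :: "tint \<Rightarrow> bool" where
  "typed_interval t \<longleftrightarrow> snd (fst t) \<le> snd (snd t)"

definition proper :: "tint \<Rightarrow> bool" where
  "proper t \<longleftrightarrow> typed_interval t \<and>
     (snd (fst t) \<noteq> snd (snd t) \<or> (fst (fst t) = fst (snd t) \<and> fst (fst t) \<noteq> TEmpty))"

text \<open>Coherence of t with the typed endpoint (z, g) of t' = [x'a', y'b'], where e is the
  grid edge of [a', b'] incident to g, given by its left x-coordinate
  (None if there is no such edge, i.e. a' = b').\<close>
definition coherent_gen :: "tint \<Rightarrow> ttype \<times> int \<Rightarrow> int option \<Rightarrow> bool" where
  "coherent_gen t zg e \<longleftrightarrow>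
     (let (x, \<alpha>) = fst t; (y, \<beta>) = snd t; (z, \<gamma>) = zg in
        (\<alpha> < \<gamma> \<and> \<gamma> < \<beta>) \<or>
        (z = TEmpty \<and> (\<exists>l. e = Some l \<and> \<alpha> \<le> l \<and> l + 1 \<le> \<beta>)) \<or>
        (z \<noteq> TEmpty \<and> (zg = (x, \<alpha>) \<or> zg = (y, \<beta>))))"

definition coherent_left :: "tint \<Rightarrow> tint \<Rightarrow> bool" where
  "coherent_left t t' \<longleftrightarrow> coherent_gen t (fst t')
     (if snd (fst t') < snd (snd t') then Some (snd (fst t')) else None)"

definition coherent_right :: "tint \<Rightarrow> tint \<Rightarrow> bool" where
  "coherent_right t t' \<longleftrightarrow> coherent_gen t (snd t')
     (if snd (fst t') < snd (snd t') then Some (snd (snd t') - 1) else None)"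

definition tcontains :: "tint \<Rightarrow> tint \<Rightarrow> bool" where
  "tcontains t t' \<longleftrightarrow> snd (fst t) \<le> snd (fst t') \<and> snd (snd t') \<le> snd (snd t) \<and>
     coherent_left t t' \<and> coherent_right t t'"

definition tintersects :: "tint \<Rightarrow> tint \<Rightarrow> bool" where
  "tintersects t t' \<longleftrightarrow>
     max (snd (fst t)) (snd (fst t')) + 1 \<le> min (snd (snd t)) (snd (snd t')) \<or>
     coherent_left t t' \<or> coherent_right t t' \<or>
     coherent_left t' t \<or> coherent_right t' t"

text \<open>Type of the corner j of the path, whose neighbouring corner off row a is k:
  empty if the path ends at j, up/down according to the direction of the bend.\<close>
definition corner_type :: "point list \<Rightarrow> nat \<Rightarrow> nat \<Rightarrow> ttype" where
  "corner_type ps j k =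
     (if j = 0 \<or> j = length ps - 1 then TEmpty
      else if snd (ps ! k) > snd (ps ! j) then TUp else TDown)"

definition row_seg :: "point list \<Rightarrow> int \<Rightarrow> nat \<Rightarrow> bool" where
  "row_seg ps a i \<longleftrightarrow> Suc i < length ps \<and> horiz_seg (ps ! i) (ps ! Suc i) \<and> snd (ps ! i) = a"

definition tproj_path :: "point list \<Rightarrow> int \<Rightarrow> tint" where
  "tproj_path ps a =
     (let i = (THE i. row_seg ps a i);
          xa = fst (ps ! i); xb = fst (ps ! Suc i);
          ta = corner_type ps i (i - 1); tb = corner_type ps (Suc i) (Suc (Suc i))
      in if xa \<le> xb then ((ta, xa), (tb, xb)) else ((tb, xb), (ta, xa)))"

definition tproj :: "('v \<Rightarrow> point list) \<Rightarrow> 'v \<Rightarrow> int \<Rightarrow> tint" where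
  "tproj P u a = tproj_path (P u) a"

definition proj_clique :: "('v \<Rightarrow> point list) \<Rightarrow> 'v set \<Rightarrow> int \<Rightarrow> bool" where
  "proj_clique P Y a \<longleftrightarrow> (\<forall>u\<in>Y. \<forall>v\<in>Y. u \<noteq> v \<longrightarrow> tintersects (tproj P u a) (tproj P v a))"

end

theory Submission
  imports Defs
begin

text \<open>Pairwise intersecting nondegenerate typed intervals behave like intervals in the
  one-dimensional Helly property: they all contain the typed interval [x A, y B] spanned by the
  largest left end A and the smallest right end B, where an end carries a bend type only if all
  intervals ending there bend the same way there.  If A = B, pairwise intersection forces such a
  common bend.  A nondegenerate typed interval then meets all of them iff it meets [x A, y B].
  For a vertex u whose only row shared with the vertices of Y is a, the t-projection on a
  determines every grid edge of P_u that another such path can share, so adjacency to v is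
  intersection of the t-projections on a.\<close>

abbreviation lo :: "tint \<Rightarrow> int" where "lo t \<equiv> snd (fst t)"
abbreviation hi :: "tint \<Rightarrow> int" where "hi t \<equiv> snd (snd t)"
abbreviation tyl :: "tint \<Rightarrow> ttype" where "tyl t \<equiv> fst (fst t)"
abbreviation tyr :: "tint \<Rightarrow> ttype" where "tyr t \<equiv> fst (snd t)"

lemma coherent_gen_iff:
  "coherent_gen t zg e \<longleftrightarrow> (lo t < snd zg \<and> snd zg < hi t) \<or>
     (fst zg = TEmpty \<and> (\<exists>l. e = Some l \<and> lo t \<le> l \<and> l + 1 \<le> hi t)) \<or>
     (fst zg \<noteq> TEmpty \<and> (zg = fst t \<or> zg = snd t))"
  unfolding coherent_gen_def by (simp add: case_prod_beta)

lemma tintersects_commute: "tintersects s t \<longleftrightarrow> tintersects t s"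
  unfolding tintersects_def by (auto simp: max.commute min.commute)

lemma tintersects_iff:
  assumes s: "lo s < hi s" and t: "lo t \<le> hi t"
  shows "tintersects s t \<longleftrightarrow> max (lo s) (lo t) < min (hi s) (hi t) \<or>
     (tyl s \<noteq> TEmpty \<and> (fst s = fst t \<or> fst s = snd t)) \<or>
     (tyr s \<noteq> TEmpty \<and> (snd s = fst t \<or> snd s = snd t)) \<or>
     (lo t = hi t \<and> lo s < lo t \<and> lo t < hi s)" (is "_ \<longleftrightarrow> ?R")
proof
  assume "tintersects s t"
  then consider "max (lo s) (lo t) + 1 \<le> min (hi s) (hi t)"
    | "coherent_gen s (fst t) (if lo t < hi t then Some (lo t) else None)"
    | "coherent_gen s (snd t) (if lo t < hi t then Some (hi t - 1) else None)"
    | "coherent_gen t (fst s) (if lo s < hi s then Some (lo s) else None)"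
    | "coherent_gen t (snd s) (if lo s < hi s then Some (hi s - 1) else None)"
    unfolding tintersects_def coherent_left_def coherent_right_def by blast
  then show ?R
  proof cases
    case 1 then show ?thesis by auto
  next
    case 2 then show ?thesis using s t unfolding coherent_gen_iff by (auto split: if_splits)
  next
    case 3 then show ?thesis using s t unfolding coherent_gen_iff by (auto split: if_splits)
  next
    case 4 then show ?thesis using s t unfolding coherent_gen_iff by (auto split: if_splits)
  next
    case 5 then show ?thesis using s t unfolding coherent_gen_iff by (auto split: if_splits)
  qed
next
  assume ?R
  then show "tintersects s t"
    unfolding tintersects_def coherent_left_def coherent_right_def coherent_gen_iff by auto
qed

lemma tintersects_refl: "lo t < hi t \<Longrightarrow> tintersects t t"
  by (simp add: tintersects_iff)

lemma tintersects_left_of: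
  assumes "lo s < hi s" "lo t < hi t" "hi s \<le> lo t" "tintersects s t"
  shows "snd s = fst t \<and> tyl t \<noteq> TEmpty"
  using assms tintersects_iff[of s t] by (auto simp: prod_eq_iff)

lemma tintersects_if_coherent_endpoint:
  assumes s: "lo s < hi s" and v: "lo v < hi v"
    and z: "z \<noteq> TEmpty" and end_s: "fst s = (z, \<gamma>) \<or> snd s = (z, \<gamma>)"
    and coh: "coherent_gen v (z, \<gamma>) e"
  shows "tintersects s v"
proof -
  from coh z consider "lo v < \<gamma>" "\<gamma> < hi v" | "(z, \<gamma>) = fst v \<or> (z, \<gamma>) = snd v"
    unfolding coherent_gen_iff by auto
  then show ?thesis
  proof cases
    case 1
    then have "max (lo s) (lo v) < min (hi s) (hi v)" using s end_s by auto
    then show ?thesis using s v by (simp add: tintersects_iff)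
  next
    case 2
    then show ?thesis using s v z end_s by (auto simp: tintersects_iff prod_eq_iff)
  qed
qed

lemma tintersects_if_tcontains:
  assumes st: "tintersects s t" and vt: "tcontains v t"
    and s: "lo s < hi s" and v: "lo v < hi v" and t: "lo t \<le> hi t"
  shows "tintersects s v"
proof -
  obtain x \<alpha> y \<beta> where t_eq: "t = ((x, \<alpha>), (y, \<beta>))" by (metis prod.collapse)
  have inside: "lo v \<le> \<alpha>" "\<beta> \<le> hi v"
   and cl: "coherent_gen v (x, \<alpha>) (if \<alpha> < \<beta> then Some \<alpha> else None)"
   and cr: "coherent_gen v (y, \<beta>) (if \<alpha> < \<beta> then Some (\<beta> - 1) else None)"
    using vt unfolding tcontains_def coherent_left_def coherent_right_def t_eq by auto
  from st consider "max (lo s) \<alpha> < min (hi s) \<beta>" | "\<alpha> = \<beta>" "lo s < \<alpha>" "\<alpha> < hi s"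
    | "x \<noteq> TEmpty" "fst s = (x, \<alpha>) \<or> snd s = (x, \<alpha>)"
    | "y \<noteq> TEmpty" "fst s = (y, \<beta>) \<or> snd s = (y, \<beta>)"
    using tintersects_iff[OF s t] unfolding t_eq by auto
  then show ?thesis
  proof cases
    case 1
    then show ?thesis using s v inside by (auto simp: tintersects_iff)
  next
    case 2
    then show ?thesis using s v inside by (auto simp: tintersects_iff)
  next
    case 3
    then show ?thesis using tintersects_if_coherent_endpoint[OF s v _ _ cl] by blast
  next
    case 4
    then show ?thesis using tintersects_if_coherent_endpoint[OF s v _ _ cr] by blast
  qed
qed

definition common_type :: "ttype set \<Rightarrow> ttype" where
  "common_type Z = (if \<exists>z. z \<noteq> TEmpty \<and> Z = {z} then the_elem Z else TEmpty)"

lemma common_type_singleton: "z \<noteq> TEmpty \<Longrightarrow> common_type {z} = z"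
  unfolding common_type_def by auto

lemma common_type_nonempty: "common_type Z \<noteq> TEmpty \<Longrightarrow> Z = {common_type Z}"
  unfolding common_type_def by (auto split: if_splits)

locale tint_clique =
  fixes S :: "tint set"
  assumes finite: "finite S" and nonempty: "S \<noteq> {}"
    and nondegenerate: "t \<in> S \<Longrightarrow> lo t < hi t"
    and pairwise: "s \<in> S \<Longrightarrow> t \<in> S \<Longrightarrow> tintersects s t"
begin

definition left_end :: int where "left_end = Max (lo ` S)"
definition right_end :: int where "right_end = Min (hi ` S)"
definition at_left_end :: "tint set" where "at_left_end = {t \<in> S. lo t = left_end}"
definition at_right_end :: "tint set" where "at_right_end = {t \<in> S. hi t = right_end}"

definition core :: tint where
  "core = ((common_type (tyl ` at_left_end), left_end), (common_type (tyr ` at_right_end), right_end))"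

lemma lo_le_left_end: "t \<in> S \<Longrightarrow> lo t \<le> left_end"
  unfolding left_end_def using finite by (intro Max_ge) auto

lemma right_end_le_hi: "t \<in> S \<Longrightarrow> right_end \<le> hi t"
  unfolding right_end_def using finite by (intro Min_le) auto

lemma at_left_end_nonempty: "at_left_end \<noteq> {}"
proof -
  have "left_end \<in> lo ` S" unfolding left_end_def using finite nonempty by (intro Max_in) auto
  then obtain t where "t \<in> S" "lo t = left_end" by (rule imageE) simp
  then show ?thesis unfolding at_left_end_def by blast
qed

lemma at_right_end_nonempty: "at_right_end \<noteq> {}"
proof -
  have "right_end \<in> hi ` S" unfolding right_end_def using finite nonempty by (intro Min_in) auto
  then obtain t where "t \<in> S" "hi t = right_end" by (rule imageE) simp
  then show ?thesis unfolding at_right_end_def by blast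
qed

lemma left_end_le_right_end: "left_end \<le> right_end"
proof (rule ccontr)
  assume lt: "\<not> left_end \<le> right_end"
  obtain s t where s: "s \<in> at_right_end" and t: "t \<in> at_left_end"
    using at_left_end_nonempty at_right_end_nonempty by blast
  then have "s \<in> S" "t \<in> S" "hi s < lo t"
    using lt unfolding at_left_end_def at_right_end_def by auto
  then have "snd s = fst t"
    using tintersects_left_of[of s t] nondegenerate pairwise by simp
  then show False using \<open>hi s < lo t\<close> by simp
qed

lemma tyl_eq_tyl_core: "tyl core \<noteq> TEmpty \<Longrightarrow> t \<in> at_left_end \<Longrightarrow> tyl t = tyl core"
  using common_type_nonempty[of "tyl ` at_left_end"] unfolding core_def by auto

lemma tyr_eq_tyr_core: "tyr core \<noteq> TEmpty \<Longrightarrow> t \<in> at_right_end \<Longrightarrow> tyr t = tyr core"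
  using common_type_nonempty[of "tyr ` at_right_end"] unfolding core_def by auto

lemma tyl_core_eqI:
  assumes "z \<noteq> TEmpty" and "\<And>t. t \<in> at_left_end \<Longrightarrow> tyl t = z"
  shows "tyl core = z"
proof -
  have "tyl ` at_left_end = {z}" using assms(2) at_left_end_nonempty by auto
  then show ?thesis using assms(1) unfolding core_def by (simp add: common_type_singleton)
qed

lemma tyr_core_eqI:
  assumes "z \<noteq> TEmpty" and "\<And>t. t \<in> at_right_end \<Longrightarrow> tyr t = z"
  shows "tyr core = z"
proof -
  have "tyr ` at_right_end = {z}" using assms(2) at_right_end_nonempty by auto
  then show ?thesis using assms(1) unfolding core_def by (simp add: common_type_singleton)
qed

text \<open>A point core: every interval ending there meets every interval starting there only in a
  typed endpoint, so all of them bend the same way at that point.\<close>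
lemma degenerate_core:
  assumes eq: "left_end = right_end"
  shows "tyl core \<noteq> TEmpty \<and> tyr core = tyl core"
proof -
  have touch: "tyr s = tyl t \<and> tyl t \<noteq> TEmpty" if s: "s \<in> at_right_end" and t: "t \<in> at_left_end" for s t
  proof -
    have "s \<in> S" "t \<in> S" "hi s \<le> lo t"
      using s t eq unfolding at_left_end_def at_right_end_def by auto
    then have "snd s = fst t \<and> tyl t \<noteq> TEmpty"
      using tintersects_left_of[of s t] nondegenerate pairwise by simp
    then show ?thesis by simp
  qed
  obtain s0 t0 where s0: "s0 \<in> at_right_end" and t0: "t0 \<in> at_left_end"
    using at_left_end_nonempty at_right_end_nonempty by blast
  have z: "tyr s0 \<noteq> TEmpty" using touch[OF s0 t0] by simp
  have "tyl core = tyr s0"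
    using tyl_core_eqI[OF z] touch[OF s0] by simp
  moreover have "tyr core = tyr s0"
    using tyr_core_eqI[OF z] touch[OF _ t0] touch[OF s0 t0] by simp
  ultimately show ?thesis using z by simp
qed

lemma proper_core: "proper core"
  using left_end_le_right_end degenerate_core
  unfolding proper_def typed_interval_def core_def by auto

lemma coherent_left_core:
  assumes t: "t \<in> S"
  shows "coherent_left t core"
proof -
  have ends: "lo t \<le> left_end" "right_end \<le> hi t" "lo t < hi t"
    using t lo_le_left_end right_end_le_hi nondegenerate by auto
  consider "lo t < left_end" "left_end < hi t" | "t \<in> at_left_end" | "t \<in> at_right_end" "left_end = right_end"
    using ends left_end_le_right_end t unfolding at_left_end_def at_right_end_def by fastforce
  then show ?thesis
  proof cases
    case 1
    then show ?thesis unfolding coherent_left_def coherent_gen_iff core_def by simp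
  next
    case 2
    show ?thesis
    proof (cases "tyl core = TEmpty")
      case True
      then have "left_end < right_end" using degenerate_core left_end_le_right_end by force
      then show ?thesis using True 2 ends
        unfolding coherent_left_def coherent_gen_iff core_def at_left_end_def by auto
    next
      case False
      then show ?thesis using 2 tyl_eq_tyl_core[OF False 2]
        unfolding coherent_left_def coherent_gen_iff core_def at_left_end_def by (auto simp: prod_eq_iff)
    qed
  next
    case 3
    then have "tyr t = tyl core" "tyl core \<noteq> TEmpty" using degenerate_core tyr_eq_tyr_core by auto
    then show ?thesis using 3
      unfolding coherent_left_def coherent_gen_iff core_def at_right_end_def by (auto simp: prod_eq_iff)
  qed
qed

lemma coherent_right_core:
  assumes t: "t \<in> S"
  shows "coherent_right t core"
proof -
  have ends: "lo t \<le> left_end" "right_end \<le> hi t" "lo t < hi t"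
    using t lo_le_left_end right_end_le_hi nondegenerate by auto
  consider "lo t < right_end" "right_end < hi t" | "t \<in> at_right_end" | "t \<in> at_left_end" "left_end = right_end"
    using ends left_end_le_right_end t unfolding at_left_end_def at_right_end_def by fastforce
  then show ?thesis
  proof cases
    case 1
    then show ?thesis unfolding coherent_right_def coherent_gen_iff core_def by simp
  next
    case 2
    show ?thesis
    proof (cases "tyr core = TEmpty")
      case True
      then have "left_end < right_end" using degenerate_core left_end_le_right_end by force
      then show ?thesis using True 2 ends
        unfolding coherent_right_def coherent_gen_iff core_def at_right_end_def by auto
    next
      case False
      then show ?thesis using 2 tyr_eq_tyr_core[OF False 2]
        unfolding coherent_right_def coherent_gen_iff core_def at_right_end_def by (auto simp: prod_eq_iff)
    qed
  next
    case 3
    then have "tyl t = tyr core" "tyr core \<noteq> TEmpty" using degenerate_core tyl_eq_tyl_core by auto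
    then show ?thesis using 3
      unfolding coherent_right_def coherent_gen_iff core_def at_left_end_def by (auto simp: prod_eq_iff)
  qed
qed

lemma tcontains_core: "t \<in> S \<Longrightarrow> tcontains t core"
  using lo_le_left_end right_end_le_hi coherent_left_core coherent_right_core
  unfolding tcontains_def core_def by simp

lemma lo_core_le_hi_core: "lo core \<le> hi core"
  using left_end_le_right_end by (simp add: core_def)

lemma tintersects_core_if_all:
  assumes s: "lo s < hi s" and all: "\<And>t. t \<in> S \<Longrightarrow> tintersects s t"
  shows "tintersects s core"
proof -
  consider "hi s \<le> left_end" | "right_end \<le> lo s" | "left_end < hi s" "lo s < right_end" by linarith
  then show ?thesis
  proof cases
    case 1
    have touch: "tyl t = tyr s \<and> tyr s \<noteq> TEmpty \<and> lo t = hi s" if "t \<in> at_left_end" for t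
      using tintersects_left_of[of s t] that s 1 all[of t] nondegenerate[of t]
      unfolding at_left_end_def by (auto simp: prod_eq_iff)
    obtain t0 where t0: "t0 \<in> at_left_end" using at_left_end_nonempty by blast
    have z: "tyr s \<noteq> TEmpty" using touch[OF t0] by simp
    have "tyl core = tyr s" using tyl_core_eqI[OF z] touch by blast
    moreover have "hi s = left_end" using touch[OF t0] t0 unfolding at_left_end_def by auto
    ultimately have "snd s = fst core" by (simp add: core_def prod_eq_iff)
    then show ?thesis using z s lo_core_le_hi_core by (auto simp: tintersects_iff)
  next
    case 2
    have touch: "tyr t = tyl s \<and> tyl s \<noteq> TEmpty \<and> hi t = lo s" if "t \<in> at_right_end" for t
      using tintersects_left_of[of t s] that s 2 all[of t] nondegenerate[of t] tintersects_commute
      unfolding at_right_end_def by (auto simp: prod_eq_iff)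
    obtain t0 where t0: "t0 \<in> at_right_end" using at_right_end_nonempty by blast
    have z: "tyl s \<noteq> TEmpty" using touch[OF t0] by simp
    have "tyr core = tyl s" using tyr_core_eqI[OF z] touch by blast
    moreover have "lo s = right_end" using touch[OF t0] t0 unfolding at_right_end_def by auto
    ultimately have "fst s = snd core" by (simp add: core_def prod_eq_iff)
    then show ?thesis using z s lo_core_le_hi_core by (auto simp: tintersects_iff)
  next
    case 3
    then show ?thesis using s lo_core_le_hi_core by (auto simp: tintersects_iff core_def)
  qed
qed

lemma tintersects_core_iff:
  assumes s: "lo s < hi s"
  shows "(\<forall>t \<in> S. tintersects s t) \<longleftrightarrow> tintersects s core"
proof
  assume "\<forall>t \<in> S. tintersects s t"
  then show "tintersects s core" using tintersects_core_if_all s by blast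
next
  assume st: "tintersects s core"
  show "\<forall>t \<in> S. tintersects s t"
  proof
    fix t assume "t \<in> S"
    then show "tintersects s t"
      using tintersects_if_tcontains[OF st tcontains_core s nondegenerate lo_core_le_hi_core] by simp
  qed
qed

end

lemma path_edges_four:
  "path_edges [p0, p1, p2, p3] = seg_edges p0 p1 \<union> seg_edges p1 p2 \<union> seg_edges p2 p3"
  unfolding path_edges_def by (auto simp: eval_nat_numeral less_Suc_eq)

lemma seg_edges_horizontal:
  "seg_edges (x, y) (x', y) = {HE r y | r. min x x' \<le> r \<and> r < max x x'}"
  unfolding seg_edges_def by auto

lemma seg_edges_vertical:
  "y \<noteq> y' \<Longrightarrow> seg_edges (x, y) (x, y') = {VE x w | w. min y y' \<le> w \<and> w < max y y'}"
  unfolding seg_edges_def by auto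

text \<open>VE g w joins rows w and w + 1, so it lies above row a iff a \<le> w.\<close>
definition on_side :: "ttype \<Rightarrow> int \<Rightarrow> int \<Rightarrow> bool" where
  "on_side z a w \<longleftrightarrow> (z = TUp \<and> a \<le> w) \<or> (z = TDown \<and> w < a)"

text \<open>The grid edges of ps, as far as they can be shared with a path whose only common row
  with ps is a, are determined by t: the horizontal ones fill [lo t, hi t] on row a, and the
  vertical ones leave that segment at its ends in the directions given by the types.\<close>
definition describes_on_row :: "point list \<Rightarrow> int \<Rightarrow> tint \<Rightarrow> bool" where
  "describes_on_row ps a t \<longleftrightarrow> lo t < hi t \<and>
    (\<forall>r. HE r a \<in> path_edges ps \<longleftrightarrow> lo t \<le> r \<and> r < hi t) \<and>
    (\<forall>g w. VE g w \<in> path_edges ps \<longrightarrow>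
       (g = lo t \<and> on_side (tyl t) a w) \<or> (g = hi t \<and> on_side (tyr t) a w)) \<and>
    (tyl t = TUp \<longrightarrow> VE (lo t) a \<in> path_edges ps) \<and>
    (tyl t = TDown \<longrightarrow> VE (lo t) (a - 1) \<in> path_edges ps) \<and>
    (tyr t = TUp \<longrightarrow> VE (hi t) a \<in> path_edges ps) \<and>
    (tyr t = TDown \<longrightarrow> VE (hi t) (a - 1) \<in> path_edges ps)"

lemma describes_on_row_vhv:
  assumes "y0 \<noteq> y1" "x1 \<noteq> x2" "y1 \<noteq> y3" and ps: "ps = [(x1, y0), (x1, y1), (x2, y1), (x2, y3)]"
    and row: "HE r0 a \<in> path_edges ps"
  shows "describes_on_row ps a (tproj_path ps a)"
proof -
  have edges: "path_edges ps = {VE x1 w | w. min y0 y1 \<le> w \<and> w < max y0 y1} \<union>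
     {HE r y1 | r. min x1 x2 \<le> r \<and> r < max x1 x2} \<union> {VE x2 w | w. min y1 y3 \<le> w \<and> w < max y1 y3}"
    unfolding ps path_edges_four using assms by (simp add: seg_edges_horizontal seg_edges_vertical)
  have a: "a = y1" using row unfolding edges by auto
  have "(THE i. row_seg ps a i) = 1"
    by (rule the_equality)
       (use assms a in \<open>auto simp: row_seg_def ps horiz_seg_def less_Suc_eq eval_nat_numeral\<close>)
  then have tp: "tproj_path ps a =
      (if x1 \<le> x2 then (((if y0 > y1 then TUp else TDown), x1), ((if y3 > y1 then TUp else TDown), x2))
       else (((if y3 > y1 then TUp else TDown), x2), ((if y0 > y1 then TUp else TDown), x1)))"
    unfolding tproj_path_def by (simp add: ps corner_type_def Let_def)
  show ?thesis
    unfolding describes_on_row_def tp edges on_side_def using assms(1-3) a by (auto simp: min_def max_def)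
qed

lemma describes_on_row_hvh:
  assumes "x0 \<noteq> x1" "y1 \<noteq> y2" "x1 \<noteq> x3" and ps: "ps = [(x0, y1), (x1, y1), (x1, y2), (x3, y2)]"
    and row: "HE r0 a \<in> path_edges ps"
  shows "describes_on_row ps a (tproj_path ps a)"
proof -
  have edges: "path_edges ps = {HE r y1 | r. min x0 x1 \<le> r \<and> r < max x0 x1} \<union>
     {VE x1 w | w. min y1 y2 \<le> w \<and> w < max y1 y2} \<union> {HE r y2 | r. min x1 x3 \<le> r \<and> r < max x1 x3}"
    unfolding ps path_edges_four using assms by (simp add: seg_edges_horizontal seg_edges_vertical)
  have "a = y1 \<or> a = y2" using row unfolding edges by auto
  then show ?thesis
  proof
    assume a: "a = y1"
    have "(THE i. row_seg ps a i) = 0"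
      by (rule the_equality)
         (use assms a in \<open>auto simp: row_seg_def ps horiz_seg_def less_Suc_eq eval_nat_numeral\<close>)
    then have tp: "tproj_path ps a = (if x0 \<le> x1 then ((TEmpty, x0), ((if y2 > y1 then TUp else TDown), x1))
        else (((if y2 > y1 then TUp else TDown), x1), (TEmpty, x0)))"
      unfolding tproj_path_def by (simp add: ps corner_type_def Let_def)
    show ?thesis
      unfolding describes_on_row_def tp edges on_side_def using assms(1-3) a by (auto simp: min_def max_def)
  next
    assume a: "a = y2"
    have "(THE i. row_seg ps a i) = 2"
      by (rule the_equality)
         (use assms a in \<open>auto simp: row_seg_def ps horiz_seg_def less_Suc_eq eval_nat_numeral\<close>)
    then have tp: "tproj_path ps a = (if x1 \<le> x3 then (((if y1 > y2 then TUp else TDown), x1), (TEmpty, x3))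
        else ((TEmpty, x3), ((if y1 > y2 then TUp else TDown), x1)))"
      unfolding tproj_path_def by (simp add: ps corner_type_def Let_def eval_nat_numeral)
    show ?thesis
      unfolding describes_on_row_def tp edges on_side_def using assms(1-3) a by (auto simp: min_def max_def)
  qed
qed

lemma describes_on_row_tproj_path:
  assumes path: "two_bend_path ps" and row: "HE r0 a \<in> path_edges ps"
  shows "describes_on_row ps a (tproj_path ps a)"
proof -
  obtain x0 y0 x1 y1 x2 y2 x3 y3 where ps: "ps = [(x0, y0), (x1, y1), (x2, y2), (x3, y3)]"
    using path unfolding two_bend_path_def by (auto simp: length_Suc_conv eval_nat_numeral)
  from path consider
     (VHV) "x0 = x1" "y0 \<noteq> y1" "y1 = y2" "x1 \<noteq> x2" "x2 = x3" "y2 \<noteq> y3"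
   | (HVH) "y0 = y1" "x0 \<noteq> x1" "x1 = x2" "y1 \<noteq> y2" "y2 = y3" "x2 \<noteq> x3"
    unfolding two_bend_path_def ps horiz_seg_def vert_seg_def by auto
  then show ?thesis
  proof cases
    case VHV
    then show ?thesis using describes_on_row_vhv[of y0 y1 x1 x2 y3 ps r0] row ps by simp
  next
    case HVH
    then show ?thesis using describes_on_row_hvh[of x0 x1 y1 y2 x3 ps r0] row ps by simp
  qed
qed

lemma on_side_unique: "on_side z a w \<Longrightarrow> on_side z' a w \<Longrightarrow> z = z' \<and> z \<noteq> TEmpty"
  unfolding on_side_def by auto

lemma shared_edge_iff_tintersects:
  assumes u: "describes_on_row pu a tu" and v: "describes_on_row pv a tv"
    and rows: "\<And>r w. HE r w \<in> path_edges pu \<Longrightarrow> HE r w \<in> path_edges pv \<Longrightarrow> w = a"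
  shows "path_edges pu \<inter> path_edges pv \<noteq> {} \<longleftrightarrow> tintersects tu tv"
proof -
  have nondeg: "lo tu < hi tu" "lo tv < hi tv" using u v unfolding describes_on_row_def by auto
  note tint = tintersects_iff[OF nondeg(1) less_imp_le[OF nondeg(2)]]
  show ?thesis
  proof
    assume "path_edges pu \<inter> path_edges pv \<noteq> {}"
    then obtain e where eu: "e \<in> path_edges pu" and ev: "e \<in> path_edges pv" by blast
    show "tintersects tu tv"
    proof (cases e)
      case (HE r w)
      then have "w = a" using rows eu ev by auto
      then have "lo tu \<le> r \<and> r < hi tu" "lo tv \<le> r \<and> r < hi tv"
        using u v eu ev HE unfolding describes_on_row_def by auto
      then show ?thesis unfolding tint by auto
    next
      case (VE g w)
      have "(g = lo tu \<and> on_side (tyl tu) a w) \<or> (g = hi tu \<and> on_side (tyr tu) a w)"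
           "(g = lo tv \<and> on_side (tyl tv) a w) \<or> (g = hi tv \<and> on_side (tyr tv) a w)"
        using u v eu ev VE unfolding describes_on_row_def by auto
      then show ?thesis unfolding tint by (auto simp: prod_eq_iff dest: on_side_unique)
    qed
  next
    assume "tintersects tu tv"
    then consider (overlap) "max (lo tu) (lo tv) < min (hi tu) (hi tv)"
      | (left) "tyl tu \<noteq> TEmpty" "fst tu = fst tv \<or> fst tu = snd tv"
      | (right) "tyr tu \<noteq> TEmpty" "snd tu = fst tv \<or> snd tu = snd tv"
      unfolding tint using nondeg by auto
    then show "path_edges pu \<inter> path_edges pv \<noteq> {}"
    proof cases
      case overlap
      then have "HE (max (lo tu) (lo tv)) a \<in> path_edges pu \<inter> path_edges pv"
        using u v unfolding describes_on_row_def by auto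
      then show ?thesis by blast
    next
      case left
      then show ?thesis using u v unfolding describes_on_row_def by (cases "tyl tu") (auto simp: prod_eq_iff)
    next
      case right
      then show ?thesis using u v unfolding describes_on_row_def by (cases "tyr tu") (auto simp: prod_eq_iff)
    qed
  qed
qed

lemma describes_on_row_tproj:
  assumes "B2_EPG_rep V E P" "u \<in> V" "a \<in> index P u"
  shows "describes_on_row (P u) a (tproj P u a)"
proof -
  obtain r where "HE r a \<in> path_edges (P u)" using assms(3) unfolding index_def by blast
  then show ?thesis
    using describes_on_row_tproj_path assms(1,2) unfolding B2_EPG_rep_def tproj_def by blast
qed

lemma adjacent_iff_tintersects_tproj:
  assumes rep: "B2_EPG_rep V E P" and "u \<in> V" "v \<in> V" "u \<noteq> v"
    and "a \<in> index P u" "a \<in> index P v" and rows: "index P u \<inter> index P v \<subseteq> {a}"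
  shows "E u v \<longleftrightarrow> tintersects (tproj P u a) (tproj P v a)"
proof -
  have "E u v \<longleftrightarrow> path_edges (P u) \<inter> path_edges (P v) \<noteq> {}"
    using rep assms(2-4) unfolding B2_EPG_rep_def by blast
  also have "\<dots> \<longleftrightarrow> tintersects (tproj P u a) (tproj P v a)"
    by (rule shared_edge_iff_tintersects[OF describes_on_row_tproj[OF rep assms(2,5)]
          describes_on_row_tproj[OF rep assms(3,6)]])
      (use rows in \<open>auto simp: index_def\<close>)
  finally show ?thesis .
qed

lemma lo_tproj_less_hi_tproj:
  assumes "B2_EPG_rep V E P" "u \<in> V" "a \<in> index P u"
  shows "lo (tproj P u a) < hi (tproj P u a)"
  using describes_on_row_tproj[OF assms] unfolding describes_on_row_def by blast

lemma tint_clique_tproj: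
  assumes "finite V" and rep: "B2_EPG_rep V E P" and "Y \<subseteq> V" "Y \<noteq> {}"
    and "\<forall>v\<in>Y. a \<in> index P v" and "proj_clique P Y a"
  shows "tint_clique ((\<lambda>v. tproj P v a) ` Y)"
proof
  show "finite ((\<lambda>v. tproj P v a) ` Y)" using assms(1,3) finite_subset by blast
  show "(\<lambda>v. tproj P v a) ` Y \<noteq> {}" using assms(4) by blast
  show "lo t < hi t" if "t \<in> (\<lambda>v. tproj P v a) ` Y" for t
    using that lo_tproj_less_hi_tproj[OF rep] assms(3,5) by blast
  fix s t assume "s \<in> (\<lambda>v. tproj P v a) ` Y" "t \<in> (\<lambda>v. tproj P v a) ` Y"
  then obtain v w where "v \<in> Y" "w \<in> Y" "s = tproj P v a" "t = tproj P w a" by blast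
  then show "tintersects s t"
    using assms(3,5,6) tintersects_refl[OF lo_tproj_less_hi_tproj[OF rep, of v]] unfolding proj_clique_def
    by (cases "v = w") auto
qed

theorem lemma4:
  fixes V :: "'v set" and E :: "'v \<Rightarrow> 'v \<Rightarrow> bool" and P :: "'v \<Rightarrow> point list"
    and Y :: "'v set" and a :: int
  assumes "finite V"
    and "B2_EPG_rep V E P"
    and "Y \<subseteq> V" and "Y \<noteq> {}"
    and "\<forall>v\<in>Y. a \<in> index P v"
    and "proj_clique P Y a"
  shows "\<exists>t. proper t \<and>
           (\<forall>v\<in>Y. tcontains (tproj P v a) t) \<and>
           (\<forall>u\<in>V. (index P u = {a} \<or> (\<exists>c. index P u = {a, c} \<and> (\<forall>v\<in>Y. c \<notin> index P v))) \<longrightarrow>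
              ((\<forall>v\<in>Y. v \<noteq> u \<longrightarrow> E u v) \<longleftrightarrow> tintersects (tproj P u a) t))"
proof -
  interpret Y: tint_clique "(\<lambda>v. tproj P v a) ` Y"
    using tint_clique_tproj[OF assms] .
  note nondeg = lo_tproj_less_hi_tproj[OF assms(2)]
  have "(\<forall>v\<in>Y. v \<noteq> u \<longrightarrow> E u v) \<longleftrightarrow> tintersects (tproj P u a) Y.core"
    if u: "u \<in> V" and "index P u = {a} \<or> (\<exists>c. index P u = {a, c} \<and> (\<forall>v\<in>Y. c \<notin> index P v))" for u
  proof -
    have a: "a \<in> index P u" and rows: "\<And>v. v \<in> Y \<Longrightarrow> index P u \<inter> index P v \<subseteq> {a}"
      using that by auto
    have "(v \<noteq> u \<longrightarrow> E u v) \<longleftrightarrow> tintersects (tproj P u a) (tproj P v a)" if "v \<in> Y" for v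
      using adjacent_iff_tintersects_tproj[OF assms(2) u, of v] rows[OF that] that assms(3,5)
        tintersects_refl[OF nondeg[OF u a]] a by (cases "v = u") auto
    then have "(\<forall>v\<in>Y. v \<noteq> u \<longrightarrow> E u v) \<longleftrightarrow> (\<forall>v\<in>Y. tintersects (tproj P u a) (tproj P v a))"
      by blast
    also have "\<dots> \<longleftrightarrow> tintersects (tproj P u a) Y.core"
      using Y.tintersects_core_iff[OF nondeg[OF u a]] by simp
    finally show ?thesis .
  qed
  then show ?thesis using Y.proper_core Y.tcontains_core by blast
qed

end
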